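(* Let $R$ be a local $\mathbb{F}_p$-algebra and let $M$ be a finitely presented $R$-module such that $F_R^*M\simeq M$, where $F_R$ is the absolute Frobenius of $R$. Then $M$ is free. *)

theory Defs
  imports Main HOL.Modules "HOL-Computational_Algebra.Primes"
begin

definition is_ideal :: "'a::comm_ring_1 set \<Rightarrow> bool" where
  "is_ideal I \<longleftrightarrow> 0 \<in> I \<and> (\<forall>x\<in>I. \<forall>y\<in>I. x + y \<in> I) \<and> (\<forall>r. \<forall>x\<in>I. r * x \<in> I)"

definition maximal_ideal :: "'a::comm_ring_1 set \<Rightarrow> bool" where
  "maximal_ideal I \<longleftrightarrow> is_ideal I \<and> I \<noteq> UNIV \<and>
     (\<forall>J. is_ideal J \<longrightarrow> I \<subseteq> J \<longrightarrow> J = I \<or> J = UNIV)"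

definition local_ring :: "'a::comm_ring_1 itself \<Rightarrow> bool" where
  "local_ring _ \<longleftrightarrow> (\<exists>!I::'a set. maximal_ideal I)"

text \<open>M (the type 'b with scalar multiplication scale) is finitely presented:
  there are finitely many generators g 0, ..., g (n-1), and the module of
  relations among them (a submodule of R^n, vectors encoded as nat-indexed
  functions vanishing from n on) is generated by a finite set K.\<close>
definition fin_presented :: "('a::comm_ring_1 \<Rightarrow> 'b::ab_group_add \<Rightarrow> 'b) \<Rightarrow> bool" where
  "fin_presented scale \<longleftrightarrow>
     (\<exists>(n::nat) (g::nat \<Rightarrow> 'b). module.span scale (g ` {..<n}) = UNIV \<and>
        (let Rel = {c::nat \<Rightarrow> 'a. (\<forall>i\<ge>n. c i = 0) \<and> (\<Sum>i<n. scale (c i) (g i)) = 0}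
         in \<exists>K. finite K \<and> K \<subseteq> Rel \<and>
              (\<forall>c\<in>Rel. \<exists>a::(nat \<Rightarrow> 'a) \<Rightarrow> 'a. c = (\<lambda>i. \<Sum>k\<in>K. a k * k i))))"

definition free_module :: "('a::comm_ring_1 \<Rightarrow> 'b::ab_group_add \<Rightarrow> 'b) \<Rightarrow> bool" where
  "free_module scale \<longleftrightarrow> (\<exists>B. module.independent scale B \<and> module.span scale B = UNIV)"

text \<open>Built as the free abelian group on R \<times> M (finitely supported int-valued
  functions) modulo the subgroup generated by the bilinearity relations and
  (s * a^p) \<otimes> m = s \<otimes> (a m); R acts on the left tensor factor.\<close>

definition fsupp :: "('c \<Rightarrow> int) \<Rightarrow> bool" where
  "fsupp c \<longleftrightarrow> finite {x. c x \<noteq> 0}"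

definition delta :: "'c \<Rightarrow> 'c \<Rightarrow> int" where
  "delta x = (\<lambda>y. if y = x then 1 else 0)"

inductive_set frob_rel :: "('a::comm_ring_1 \<Rightarrow> 'b::ab_group_add \<Rightarrow> 'b) \<Rightarrow> nat \<Rightarrow> (('a \<times> 'b) \<Rightarrow> int) set"
  for scale :: "'a::comm_ring_1 \<Rightarrow> 'b::ab_group_add \<Rightarrow> 'b" and p :: nat where
  zero: "(\<lambda>_. 0) \<in> frob_rel scale p"
| add_left: "(\<lambda>x. delta (s + s', m) x - delta (s, m) x - delta (s', m) x) \<in> frob_rel scale p"
| add_right: "(\<lambda>x. delta (s, m + m') x - delta (s, m) x - delta (s, m') x) \<in> frob_rel scale p"
| frob: "(\<lambda>x. delta (s * a ^ p, m) x - delta (s, scale a m) x) \<in> frob_rel scale p"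
| plus: "c \<in> frob_rel scale p \<Longrightarrow> d \<in> frob_rel scale p \<Longrightarrow> (\<lambda>x. c x + d x) \<in> frob_rel scale p"
| uminus: "c \<in> frob_rel scale p \<Longrightarrow> (\<lambda>x. - c x) \<in> frob_rel scale p"

definition frob_cls :: "('a::comm_ring_1 \<Rightarrow> 'b::ab_group_add \<Rightarrow> 'b) \<Rightarrow> nat \<Rightarrow> (('a \<times> 'b) \<Rightarrow> int) \<Rightarrow> (('a \<times> 'b) \<Rightarrow> int) set" where
  "frob_cls scale p c = {d. (\<lambda>x. c x - d x) \<in> frob_rel scale p}"

definition frob_pullback :: "('a::comm_ring_1 \<Rightarrow> 'b::ab_group_add \<Rightarrow> 'b) \<Rightarrow> nat \<Rightarrow> (('a \<times> 'b) \<Rightarrow> int) set set" where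
  "frob_pullback scale p = frob_cls scale p ` {c. fsupp c}"

text \<open>R-action on formal sums: r \<cdot> (s, m) = (r s, m), extended additively.\<close>
definition frob_act :: "'a::comm_ring_1 \<Rightarrow> (('a \<times> 'b) \<Rightarrow> int) \<Rightarrow> (('a \<times> 'b) \<Rightarrow> int)" where
  "frob_act r c = (\<lambda>(s, m). \<Sum>s'\<in>{s'. r * s' = s \<and> c (s', m) \<noteq> 0}. c (s', m))"

definition frob_pullback_iso :: "('a::comm_ring_1 \<Rightarrow> 'b::ab_group_add \<Rightarrow> 'b) \<Rightarrow> nat \<Rightarrow> ('b \<Rightarrow> (('a \<times> 'b) \<Rightarrow> int) set) \<Rightarrow> bool" where
  "frob_pullback_iso scale p h \<longleftrightarrow>
     bij_betw h UNIV (frob_pullback scale p) \<and>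
     (\<forall>x y c d. fsupp c \<longrightarrow> fsupp d \<longrightarrow> h x = frob_cls scale p c \<longrightarrow> h y = frob_cls scale p d \<longrightarrow>
         h (x + y) = frob_cls scale p (\<lambda>z. c z + d z)) \<and>
     (\<forall>r x c. fsupp c \<longrightarrow> h x = frob_cls scale p c \<longrightarrow>
         h (scale r x) = frob_cls scale p (frob_act r c))"

end

theory Submission
  imports Defs
begin

text \<open>Choose a presentation of \<open>M\<close> with the least number of generators \<open>g\<^sub>i\<close>. Then no relation
  has a unit coefficient, so all relation coefficients lie in the maximal ideal \<open>\<m>\<close>; let \<open>I\<close> be the
  ideal they generate. The elements \<open>1 \<otimes> g\<^sub>i\<close> generate \<open>F\<^sup>*M\<close>, and modulo \<open>\<m>I\<close> the map
  \<open>s \<otimes> y \<mapsto> s \<sigma>\<^sub>j(y)\<^sup>p\<close> (\<open>\<sigma>\<close> a choice of coordinates with respect to \<open>g\<close>) is well defined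
  on \<open>F\<^sup>*M\<close>: coordinates are additive and linear up to relations, and \<open>p\<close>-th powers of relation
  coefficients lie in \<open>\<m>I\<close>. Hence relations among the \<open>1 \<otimes> g\<^sub>i\<close> have coefficients in \<open>\<m>I\<close>.
  Transporting them along \<open>M \<cong> F\<^sup>*M\<close> shows that the same holds for the relations among the
  \<open>g\<^sub>i\<close>, so \<open>I = \<m>I\<close>. By Nakayama \<open>I = 0\<close>: the presentation has no relations and \<open>M\<close> is free.\<close>

section \<open>Ideals and local rings\<close>

lemma ideal_zero: "is_ideal I \<Longrightarrow> 0 \<in> I"
  unfolding is_ideal_def by blast

lemma ideal_add: "is_ideal I \<Longrightarrow> x \<in> I \<Longrightarrow> y \<in> I \<Longrightarrow> x + y \<in> I"
  unfolding is_ideal_def by blast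

lemma ideal_mult_left: "is_ideal I \<Longrightarrow> x \<in> I \<Longrightarrow> r * x \<in> I"
  unfolding is_ideal_def by blast

lemma ideal_mult_right: "is_ideal I \<Longrightarrow> x \<in> I \<Longrightarrow> x * r \<in> I"
  using ideal_mult_left[of I x r] by (simp add: mult.commute)

lemma ideal_neg: "is_ideal I \<Longrightarrow> x \<in> I \<Longrightarrow> - x \<in> I"
  using ideal_mult_left[of I x "- 1"] by simp

lemma ideal_diff: "is_ideal I \<Longrightarrow> x \<in> I \<Longrightarrow> y \<in> I \<Longrightarrow> x - y \<in> I"
  using ideal_add[of I x "- y"] ideal_neg[of I y] by simp

lemma ideal_sum: "is_ideal I \<Longrightarrow> (\<And>x. x \<in> A \<Longrightarrow> f x \<in> I) \<Longrightarrow> sum f A \<in> I"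
  by (induction A rule: infinite_finite_induct) (auto simp: ideal_zero ideal_add)

lemma ideal_power: "is_ideal I \<Longrightarrow> x \<in> I \<Longrightarrow> n > 0 \<Longrightarrow> x ^ n \<in> I"
  by (cases n) (simp_all add: ideal_mult_right)

lemma ideal_eq_UNIV_iff: "is_ideal I \<Longrightarrow> I = UNIV \<longleftrightarrow> 1 \<in> I"
  using ideal_mult_right[of I 1] by auto

lemma is_ideal_UNIV: "is_ideal UNIV"
  by (simp add: is_ideal_def)

lemma is_ideal_principal: "is_ideal (range (\<lambda>r. r * x))"
  unfolding is_ideal_def
proof (intro conjI ballI allI)
  show "0 \<in> range (\<lambda>r. r * x)" by (rule range_eqI[of _ _ 0]) simp
next
  fix u v assume "u \<in> range (\<lambda>r. r * x)" "v \<in> range (\<lambda>r. r * x)"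
  then obtain a b where "u = a * x" "v = b * x" by blast
  then show "u + v \<in> range (\<lambda>r. r * x)" by (intro range_eqI[of _ _ "a + b"]) (simp add: distrib_right)
next
  fix r u assume "u \<in> range (\<lambda>r. r * x)"
  then obtain a where "u = a * x" by blast
  then show "r * u \<in> range (\<lambda>r. r * x)" by (intro range_eqI[of _ _ "r * a"]) (simp add: mult.assoc)
qed

lemma exists_maximal_ideal:
  fixes J :: "'a::comm_ring_1 set"
  assumes "is_ideal J" "1 \<notin> J"
  obtains M where "maximal_ideal M" "J \<subseteq> M"
proof -
  define \<A> where "\<A> = {I. is_ideal I \<and> J \<subseteq> I \<and> 1 \<notin> I}"
  have "\<exists>M\<in>\<A>. \<forall>I\<in>\<A>. M \<subseteq> I \<longrightarrow> I = M"
  proof (rule subset_Zorn_nonempty)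
    show "\<A> \<noteq> {}" using assms \<A>_def by blast
  next
    fix C assume "C \<noteq> {}" and "subset.chain \<A> C"
    then have C: "C \<subseteq> \<A>" "\<And>X Y. X \<in> C \<Longrightarrow> Y \<in> C \<Longrightarrow> X \<subseteq> Y \<or> Y \<subseteq> X" and "C \<noteq> {}"
      by (auto simp: subset.chain_def)
    have "is_ideal (\<Union>C)"
      unfolding is_ideal_def
    proof (intro conjI ballI allI)
      show "0 \<in> \<Union>C" using C \<open>C \<noteq> {}\<close> ideal_zero unfolding \<A>_def by blast
    next
      fix x y assume "x \<in> \<Union>C" "y \<in> \<Union>C"
      then obtain X Y where "X \<in> C" "Y \<in> C" "x \<in> X" "y \<in> Y" by blast
      with C show "x + y \<in> \<Union>C"
        unfolding \<A>_def by (metis (no_types, lifting) UnionI ideal_add mem_Collect_eq subset_iff)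
    next
      fix r x assume "x \<in> \<Union>C"
      with C show "r * x \<in> \<Union>C" unfolding \<A>_def using ideal_mult_left by blast
    qed
    with C \<open>C \<noteq> {}\<close> show "\<Union>C \<in> \<A>" unfolding \<A>_def by auto
  qed
  then obtain M where M: "M \<in> \<A>" "\<And>I. I \<in> \<A> \<Longrightarrow> M \<subseteq> I \<Longrightarrow> I = M" by blast
  have "maximal_ideal M"
    unfolding maximal_ideal_def
  proof (intro conjI allI impI)
    show "is_ideal M" "M \<noteq> UNIV" using M(1) unfolding \<A>_def by auto
  next
    fix I assume "is_ideal I" "M \<subseteq> I"
    with M show "I = M \<or> I = UNIV"
      using ideal_eq_UNIV_iff[of I] unfolding \<A>_def by auto
  qed
  with M(1) that show ?thesis unfolding \<A>_def by blast
qed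

lemma local_ring_nonunits_ideal:
  assumes "local_ring TYPE('a::comm_ring_1)"
  shows "is_ideal {x::'a. \<not> x dvd 1}"
proof -
  obtain M :: "'a set" where M: "maximal_ideal M" and unique: "\<And>I. maximal_ideal I \<Longrightarrow> I = M"
    using assms unfolding local_ring_def by blast
  have ideal: "is_ideal M" and proper: "1 \<notin> M"
    using M ideal_eq_UNIV_iff[of M] unfolding maximal_ideal_def by auto
  have "{x. \<not> x dvd 1} = M"
  proof (intro equalityI subsetI)
    fix x :: 'a assume "x \<in> {x. \<not> x dvd 1}"
    have "1 \<notin> range (\<lambda>r. r * x)"
    proof
      assume "1 \<in> range (\<lambda>r. r * x)"
      then obtain r where "r * x = 1" by auto
      then have "x dvd 1" using dvd_triv_right[of x r] by simp
      with \<open>x \<in> {x. \<not> x dvd 1}\<close> show False by blast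
    qed
    then obtain I where "maximal_ideal I" "range (\<lambda>r. r * x) \<subseteq> I"
      using exists_maximal_ideal is_ideal_principal by blast
    then show "x \<in> M" using unique by (metis mult_1 rangeI subsetD)
  next
    fix x assume x: "x \<in> M"
    have "\<not> x dvd 1"
    proof
      assume "x dvd 1"
      then obtain k where "1 = x * k" by (rule dvdE)
      with ideal_mult_right[OF ideal x, of k] proper show False by simp
    qed
    then show "x \<in> {x. \<not> x dvd 1}" by simp
  qed
  with ideal show ?thesis by simp
qed

section \<open>Nakayama's lemma\<close>

text \<open>For finite \<open>X\<close>, \<open>lincombs UNIV X\<close> is the ideal generated by \<open>X\<close> and \<open>lincombs J X\<close> its
  product with \<open>J\<close>.\<close>

definition lincombs :: "'a::comm_ring_1 set \<Rightarrow> 'a set \<Rightarrow> 'a set" where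
  "lincombs J X = {r. \<exists>b. (\<forall>x\<in>X. b x \<in> J) \<and> r = (\<Sum>x\<in>X. b x * x)}"

lemma is_ideal_lincombs:
  assumes J: "is_ideal J"
  shows "is_ideal (lincombs J X)"
proof -
  have "0 \<in> lincombs J X"
    unfolding lincombs_def by (auto intro!: exI[of _ "\<lambda>_. 0"] simp: ideal_zero[OF J])
  moreover have "u + v \<in> lincombs J X" if u: "u \<in> lincombs J X" and v: "v \<in> lincombs J X" for u v
  proof -
    obtain b where "\<forall>x\<in>X. b x \<in> J" "u = (\<Sum>x\<in>X. b x * x)"
      using u unfolding lincombs_def by blast
    moreover obtain c where "\<forall>x\<in>X. c x \<in> J" "v = (\<Sum>x\<in>X. c x * x)"
      using v unfolding lincombs_def by blast
    ultimately
    show ?thesis unfolding lincombs_def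
      by (auto intro!: exI[of _ "\<lambda>x. b x + c x"] simp: ideal_add[OF J] sum.distrib distrib_right)
  qed
  moreover have "r * u \<in> lincombs J X" if u: "u \<in> lincombs J X" for r u
  proof -
    obtain b where "\<forall>x\<in>X. b x \<in> J" "u = (\<Sum>x\<in>X. b x * x)" using u unfolding lincombs_def by blast
    then show ?thesis unfolding lincombs_def
      by (auto intro!: exI[of _ "\<lambda>x. r * b x"] simp: ideal_mult_left[OF J] sum_distrib_left mult.assoc)
  qed
  ultimately show ?thesis unfolding is_ideal_def by blast
qed

lemma lincombs_UNIV_base: "finite X \<Longrightarrow> x \<in> X \<Longrightarrow> x \<in> lincombs UNIV X"
  unfolding lincombs_def
  by (auto intro!: exI[of _ "\<lambda>y. if y = x then 1 else 0"] simp: if_distrib[of "\<lambda>t. t * _"] cong: if_cong)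

lemma mult_mem_lincombs:
  assumes "is_ideal J" "a \<in> J" "r \<in> lincombs UNIV X"
  shows "a * r \<in> lincombs J X"
proof -
  obtain b where "r = (\<Sum>x\<in>X. b x * x)" using assms(3) unfolding lincombs_def by blast
  then have "a * r = (\<Sum>x\<in>X. (a * b x) * x)" by (simp add: sum_distrib_left mult.assoc)
  then show ?thesis
    unfolding lincombs_def using ideal_mult_right[OF assms(1,2)] by (auto intro!: exI[of _ "\<lambda>x. a * b x"])
qed

lemma power_mem_lincombs:
  assumes "is_ideal J" "x \<in> J" "x \<in> lincombs UNIV X" "n > 1"
  shows "x ^ n \<in> lincombs J X"
proof -
  have "x ^ n = x ^ (n - 1) * x" using \<open>n > 1\<close> by (cases n) (simp_all add: power_Suc2)
  moreover have "x ^ (n - 1) \<in> J" using ideal_power[OF assms(1,2)] \<open>n > 1\<close> by simp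
  ultimately show ?thesis using mult_mem_lincombs[OF assms(1) _ assms(3)] by simp
qed

text \<open>An element \<open>x\<close> with \<open>x \<in> J\<cdot>(x, F)\<close> already lies in \<open>(F)\<close>, because \<open>1 - b\<close> is a unit
  for \<open>b \<in> J\<close>; so generators can be discarded one at a time.\<close>

lemma nakayama:
  fixes J :: "'a::comm_ring_1 set"
  assumes J: "is_ideal J" and units: "\<And>b. b \<in> J \<Longrightarrow> (1 - b) dvd 1"
    and "finite X" and "X \<subseteq> lincombs J X"
  shows "X \<subseteq> {0}"
  using \<open>finite X\<close> \<open>X \<subseteq> lincombs J X\<close>
proof (induction X rule: finite_induct)
  case empty
  then show ?case by simp
next
  case (insert x0 F)
  have expand: "\<exists>b. (\<forall>y\<in>insert x0 F. b y \<in> J) \<and> x = b x0 * x0 + (\<Sum>y\<in>F. b y * y)"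
    if "x \<in> insert x0 F" for x
    using insert.prems insert.hyps that unfolding lincombs_def by auto
  obtain b0 where b0: "\<forall>y\<in>insert x0 F. b0 y \<in> J" "x0 = b0 x0 * x0 + (\<Sum>y\<in>F. b0 y * y)"
    using expand by blast
  obtain v where v: "1 = (1 - b0 x0) * v" using units b0(1) by blast
  have "(1 - b0 x0) * x0 = (\<Sum>y\<in>F. b0 y * y)"
    by (metis add_diff_cancel_left' b0(2) left_diff_distrib mult_1)
  moreover have "x0 = v * ((1 - b0 x0) * x0)" by (metis v mult.assoc mult.commute mult_1)
  ultimately have x0_eq: "x0 = (\<Sum>y\<in>F. (v * b0 y) * y)" by (simp add: sum_distrib_left mult.assoc)
  then have x0: "x0 \<in> lincombs UNIV F" unfolding lincombs_def by (auto intro!: exI[of _ "\<lambda>y. v * b0 y"])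
  have "F \<subseteq> lincombs J F"
  proof
    fix x assume "x \<in> F"
    then obtain b where b: "\<forall>y\<in>insert x0 F. b y \<in> J" "x = b x0 * x0 + (\<Sum>y\<in>F. b y * y)"
      using expand by blast
    have "b x0 * x0 \<in> lincombs J F" using mult_mem_lincombs[OF J _ x0] b(1) by simp
    moreover have "(\<Sum>y\<in>F. b y * y) \<in> lincombs J F"
      using b(1) unfolding lincombs_def by (auto intro!: exI[of _ b])
    ultimately show "x \<in> lincombs J F" using b(2) ideal_add[OF is_ideal_lincombs[OF J]] by simp
  qed
  then have "F \<subseteq> {0}" by (rule insert.IH)
  moreover from this x0_eq have "x0 = 0" by (auto intro!: sum.neutral)
  ultimately show ?case by simp
qed

section \<open>Presentations\<close>

definition relations :: "('a::comm_ring_1 \<Rightarrow> 'b::ab_group_add \<Rightarrow> 'b) \<Rightarrow> nat set \<Rightarrow> (nat \<Rightarrow> 'b) \<Rightarrow> (nat \<Rightarrow> 'a) set"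
  where "relations scale S g = {c. (\<forall>i. i \<notin> S \<longrightarrow> c i = 0) \<and> (\<Sum>i\<in>S. scale (c i) (g i)) = 0}"

definition presentation :: "('a::comm_ring_1 \<Rightarrow> 'b::ab_group_add \<Rightarrow> 'b) \<Rightarrow> nat set \<Rightarrow> (nat \<Rightarrow> 'b) \<Rightarrow>
    'l set \<Rightarrow> ('l \<Rightarrow> nat \<Rightarrow> 'a) \<Rightarrow> bool"
  where "presentation scale S g L \<kappa> \<longleftrightarrow> finite S \<and> module.span scale (g ` S) = UNIV \<and> finite L \<and>
    (\<forall>l\<in>L. \<kappa> l \<in> relations scale S g) \<and>
    (\<forall>c\<in>relations scale S g. \<exists>a. c = (\<lambda>i. \<Sum>l\<in>L. a l * \<kappa> l i))"

definition presentation_entries :: "nat set \<Rightarrow> 'l set \<Rightarrow> ('l \<Rightarrow> nat \<Rightarrow> 'a) \<Rightarrow> 'a set"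
  where "presentation_entries S L \<kappa> = (\<lambda>(l, i). \<kappa> l i) ` (L \<times> S)"

lemma relations_outside: "c \<in> relations scale S g \<Longrightarrow> i \<notin> S \<Longrightarrow> c i = 0"
  by (simp add: relations_def)

lemma fin_presented_presentation:
  fixes scale :: "'a::comm_ring_1 \<Rightarrow> 'b::ab_group_add \<Rightarrow> 'b"
  assumes "fin_presented scale"
  obtains S g and L :: "(nat \<Rightarrow> 'a) set" and \<kappa> where "presentation scale S g L \<kappa>"
proof -
  obtain n g and K :: "(nat \<Rightarrow> 'a) set" where "module.span scale (g ` {..<n}) = UNIV" "finite K"
    "K \<subseteq> {c. (\<forall>i\<ge>n. c i = 0) \<and> (\<Sum>i<n. scale (c i) (g i)) = 0}"
    "\<forall>c\<in>{c. (\<forall>i\<ge>n. c i = 0) \<and> (\<Sum>i<n. scale (c i) (g i)) = 0}. \<exists>a. c = (\<lambda>i. \<Sum>k\<in>K. a k * k i)"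
    using assms unfolding fin_presented_def Let_def by blast
  moreover have "relations scale {..<n} g = {c. (\<forall>i\<ge>n. c i = 0) \<and> (\<Sum>i<n. scale (c i) (g i)) = 0}"
    unfolding relations_def by auto
  ultimately have "presentation scale {..<n} g K id"
    unfolding presentation_def by auto
  then show ?thesis by (rule that)
qed

lemma presentation_relation_entries:
  assumes P: "presentation scale S g L \<kappa>" and c: "c \<in> relations scale S g"
  shows "c i \<in> lincombs UNIV (presentation_entries S L \<kappa>)"
proof (cases "i \<in> S")
  case False
  then show ?thesis
    using relations_outside[OF c] ideal_zero[OF is_ideal_lincombs[OF is_ideal_UNIV]] by simp
next
  case True
  have fin: "finite (presentation_entries S L \<kappa>)"
    using P unfolding presentation_def presentation_entries_def by simp
  obtain a where "c = (\<lambda>i. \<Sum>l\<in>L. a l * \<kappa> l i)" using P c unfolding presentation_def by blast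
  then have "c i = (\<Sum>l\<in>L. a l * \<kappa> l i)" by simp
  moreover have "\<kappa> l i \<in> lincombs UNIV (presentation_entries S L \<kappa>)" if "l \<in> L" for l
    using lincombs_UNIV_base[OF fin] that True unfolding presentation_entries_def by auto
  ultimately show ?thesis
    by (auto intro!: ideal_sum ideal_mult_left is_ideal_lincombs is_ideal_UNIV)
qed

context module
begin

lemma sum_scale_indicator: "finite S \<Longrightarrow> i \<in> S \<Longrightarrow> (\<Sum>j\<in>S. (if j = i then 1 else 0) *s g j) = g i"
  by (simp add: if_distrib[of "\<lambda>t. t *s _"] sum.delta cong: if_cong)

lemma diff_in_relations:
  assumes "\<And>i. i \<notin> S \<Longrightarrow> a i = 0" "\<And>i. i \<notin> S \<Longrightarrow> b i = 0"
    and "(\<Sum>i\<in>S. a i *s g i) = (\<Sum>i\<in>S. b i *s g i)"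
  shows "(\<lambda>i. a i - b i) \<in> relations scale S g"
  using assms by (simp add: relations_def scale_left_diff_distrib sum_subtractf)

lemma span_image_coordinates:
  assumes "finite S" "span (g ` S) = UNIV"
  obtains \<sigma> where "\<And>y i. i \<notin> S \<Longrightarrow> \<sigma> y i = 0" "\<And>y. (\<Sum>i\<in>S. \<sigma> y i *s g i) = y"
proof -
  define V where "V = {y. \<exists>a. (\<forall>i. i \<notin> S \<longrightarrow> a i = 0) \<and> (\<Sum>i\<in>S. a i *s g i) = y}"
  have "0 \<in> V" unfolding V_def by (auto intro!: exI[of _ "\<lambda>_. 0"])
  moreover have "x + y \<in> V" if x: "x \<in> V" and y: "y \<in> V" for x y
  proof -
    obtain a where "\<forall>i. i \<notin> S \<longrightarrow> a i = 0" "(\<Sum>i\<in>S. a i *s g i) = x" using x unfolding V_def by blast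
    moreover obtain b where "\<forall>i. i \<notin> S \<longrightarrow> b i = 0" "(\<Sum>i\<in>S. b i *s g i) = y" using y unfolding V_def by blast
    ultimately show ?thesis unfolding V_def
      by (auto intro!: exI[of _ "\<lambda>i. a i + b i"] simp: scale_left_distrib sum.distrib)
  qed
  moreover have "c *s x \<in> V" if x: "x \<in> V" for c x
  proof -
    obtain a where "\<forall>i. i \<notin> S \<longrightarrow> a i = 0" "(\<Sum>i\<in>S. a i *s g i) = x" using x unfolding V_def by blast
    then show ?thesis unfolding V_def
      by (auto intro!: exI[of _ "\<lambda>i. c * a i"] simp: scale_sum_right)
  qed
  ultimately have "subspace V" unfolding subspace_def by blast
  moreover have "g ` S \<subseteq> V"
    unfolding V_def using sum_scale_indicator[OF assms(1)]
    by (auto intro!: exI[of _ "\<lambda>j. if j = _ then 1 else 0"])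
  ultimately have "UNIV \<subseteq> V" using span_minimal[of "g ` S" V] assms(2) by simp
  then have "\<forall>y. \<exists>a. (\<forall>i. i \<notin> S \<longrightarrow> a i = 0) \<and> (\<Sum>i\<in>S. a i *s g i) = y"
    unfolding V_def by blast
  then show ?thesis using that by metis
qed

lemma span_remove_generator:
  assumes "finite S" and c: "c \<in> relations scale S g" and j: "j \<in> S" and u: "c j * u = 1"
  shows "span (g ` (S - {j})) = UNIV \<longleftrightarrow> span (g ` S) = UNIV"
proof -
  have "0 = u *s (\<Sum>i\<in>S. c i *s g i)" using c by (simp add: relations_def)
  also have "\<dots> = (\<Sum>i\<in>S. (u * c i) *s g i)" by (simp add: scale_sum_right)
  also have "\<dots> = (u * c j) *s g j + (\<Sum>i\<in>S - {j}. (u * c i) *s g i)"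
    by (rule sum.remove[OF assms(1) j])
  also have "\<dots> = g j + (\<Sum>i\<in>S - {j}. (u * c i) *s g i)" using u by (simp add: mult.commute)
  finally have "g j = - (\<Sum>i\<in>S - {j}. (u * c i) *s g i)" by (simp add: eq_neg_iff_add_eq_0)
  moreover have "(\<Sum>i\<in>S - {j}. (u * c i) *s g i) \<in> span (g ` (S - {j}))"
    by (intro span_sum span_scale span_base) auto
  ultimately have gj: "g j \<in> span (g ` (S - {j}))" by (simp add: span_neg)
  have "g ` S \<subseteq> span (g ` (S - {j}))"
  proof
    fix y assume "y \<in> g ` S"
    then obtain i where "i \<in> S" "y = g i" by blast
    with gj show "y \<in> span (g ` (S - {j}))" by (cases "i = j") (auto intro: span_base)
  qed
  moreover have "g ` (S - {j}) \<subseteq> span (g ` S)" by (auto intro: span_base)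
  ultimately have "span (g ` S) = span (g ` (S - {j}))" unfolding span_eq by (rule conjI)
  then show ?thesis by simp
qed

lemma relations_remove_generator:
  assumes "finite S" "j \<in> S"
  shows "relations scale (S - {j}) g = {d \<in> relations scale S g. d j = 0}"
proof -
  have "(\<Sum>i\<in>S. d i *s g i) = (\<Sum>i\<in>S - {j}. d i *s g i)" if "d j = 0" for d
    using sum.remove[OF assms, of "\<lambda>i. d i *s g i"] that by simp
  then show ?thesis unfolding relations_def using assms(2) by auto
qed

lemma presentation_remove_generator:
  assumes P: "presentation scale S g L \<kappa>" and c: "c \<in> relations scale S g" and j: "j \<in> S"
    and u: "c j * u = 1"
  shows "presentation scale (S - {j}) g L (\<lambda>l i. \<kappa> l i - \<kappa> l j * u * c i)"
proof -
  have S: "finite S" and gen: "\<And>d. d \<in> relations scale S g \<Longrightarrow> \<exists>a. d = (\<lambda>i. \<Sum>l\<in>L. a l * \<kappa> l i)"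
    and \<kappa>: "\<And>l. l \<in> L \<Longrightarrow> \<kappa> l \<in> relations scale S g"
    using P unfolding presentation_def by auto
  let ?\<kappa>' = "\<lambda>l i. \<kappa> l i - \<kappa> l j * u * c i"
  have "?\<kappa>' l \<in> relations scale S g" if "l \<in> L" for l
  proof -
    have "(\<Sum>i\<in>S. ?\<kappa>' l i *s g i) = (\<Sum>i\<in>S. \<kappa> l i *s g i) - (\<kappa> l j * u) *s (\<Sum>i\<in>S. c i *s g i)"
      by (simp add: scale_left_diff_distrib sum_subtractf scale_sum_right mult.assoc)
    then show ?thesis using \<kappa>[OF that] c by (simp add: relations_def)
  qed
  moreover have "?\<kappa>' l j = 0" for l
    using u by (simp add: mult.assoc mult.commute[of u])
  ultimately have \<kappa>': "?\<kappa>' l \<in> relations scale (S - {j}) g" if "l \<in> L" for l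
    using that relations_remove_generator[OF S j] by simp
  have "\<exists>a. d = (\<lambda>i. \<Sum>l\<in>L. a l * ?\<kappa>' l i)" if "d \<in> relations scale (S - {j}) g" for d
  proof -
    have d: "d \<in> relations scale S g" "d j = 0" using that relations_remove_generator[OF S j] by auto
    obtain a where a: "d = (\<lambda>i. \<Sum>l\<in>L. a l * \<kappa> l i)" using gen[OF d(1)] by blast
    have "(\<Sum>l\<in>L. a l * ?\<kappa>' l i) = d i - d j * u * c i" for i
      by (simp add: a right_diff_distrib sum_subtractf sum_distrib_right mult.assoc)
    then show ?thesis using d(2) by (intro exI[of _ a]) auto
  qed
  with P \<kappa>' span_remove_generator[OF S c j u] show ?thesis
    unfolding presentation_def by auto
qed

lemma exists_minimal_presentation:
  assumes "fin_presented scale"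
  obtains S g and L :: "(nat \<Rightarrow> 'a) set" and \<kappa>
  where "presentation scale S g L \<kappa>" and "\<And>c i. c \<in> relations scale S g \<Longrightarrow> i \<in> S \<Longrightarrow> \<not> c i dvd 1"
proof -
  obtain S0 g0 and L0 :: "(nat \<Rightarrow> 'a) set" and \<kappa>0 where P0: "presentation scale S0 g0 L0 \<kappa>0"
    using fin_presented_presentation[OF assms] .
  define Q where "Q n \<longleftrightarrow> (\<exists>S g (L :: (nat \<Rightarrow> 'a) set) \<kappa>. presentation scale S g L \<kappa> \<and> card S = n)" for n
  with P0 have "Q (card S0)" by blast
  then have "Q (LEAST n. Q n)" by (rule LeastI)
  then obtain S g and L :: "(nat \<Rightarrow> 'a) set" and \<kappa>
    where P: "presentation scale S g L \<kappa>" and card_S: "card S = (LEAST n. Q n)"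
    by (auto simp: Q_def)
  have least: "card S \<le> card S'"
    if "presentation scale S' g' L' \<kappa>'" for S' g' and L' :: "(nat \<Rightarrow> 'a) set" and \<kappa>'
    unfolding card_S by (rule Least_le) (use that in \<open>auto simp: Q_def\<close>)
  have "\<not> c i dvd 1" if c: "c \<in> relations scale S g" and i: "i \<in> S" for c i
  proof
    assume "c i dvd 1"
    then obtain u where "c i * u = 1" by (metis dvdE)
    then have "card S \<le> card (S - {i})" by (rule least[OF presentation_remove_generator[OF P c i]])
    moreover have "card (S - {i}) < card S" using P i unfolding presentation_def by (meson card_Diff1_less)
    ultimately show False by simp
  qed
  with P that show ?thesis by blast
qed

text \<open>Writing \<open>g = P g'\<close> and \<open>g' = Q g\<close>, a relation \<open>c\<close> of \<open>g\<close> yields the relation \<open>c P\<close> of \<open>g'\<close>,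
  and \<open>c = (c P) Q + c (1 - P Q)\<close>, where the rows of \<open>1 - P Q\<close> are relations of \<open>g\<close>.\<close>

lemma relation_entries_transfer:
  assumes S: "finite S" "span (g ` S) = UNIV" and T: "finite T" "span (g' ` T) = UNIV"
    and K: "is_ideal K"
    and rel_g': "\<And>d l. d \<in> relations scale T g' \<Longrightarrow> d l \<in> K"
    and rel_g: "\<And>c e i q. c \<in> relations scale S g \<Longrightarrow> e \<in> relations scale S g \<Longrightarrow> e q * c i \<in> K"
    and c: "c \<in> relations scale S g"
  shows "c q \<in> K"
proof -
  obtain \<sigma> :: "'b \<Rightarrow> nat \<Rightarrow> 'a" where \<sigma>0: "\<And>y i. i \<notin> S \<Longrightarrow> \<sigma> y i = 0" and \<sigma>: "\<And>y. (\<Sum>i\<in>S. \<sigma> y i *s g i) = y"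
    using span_image_coordinates[OF S] by blast
  obtain \<tau> :: "'b \<Rightarrow> nat \<Rightarrow> 'a" where \<tau>0: "\<And>y l. l \<notin> T \<Longrightarrow> \<tau> y l = 0" and \<tau>: "\<And>y. (\<Sum>l\<in>T. \<tau> y l *s g' l) = y"
    using span_image_coordinates[OF T] by blast
  define d where "d l = (\<Sum>i\<in>S. c i * \<tau> (g i) l)" for l
  define E where "E i = (\<lambda>q. (if q = i then 1 else 0) - (\<Sum>l\<in>T. \<tau> (g i) l * \<sigma> (g' l) q))" for i
  have "(\<Sum>l\<in>T. d l *s g' l) = (\<Sum>i\<in>S. c i *s (\<Sum>l\<in>T. \<tau> (g i) l *s g' l))"
    by (simp add: d_def scale_sum_left scale_sum_right sum.swap[of _ T])
  also have "\<dots> = 0" using c by (simp add: \<tau> relations_def)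
  finally have d: "d \<in> relations scale T g'"
    using \<tau>0 by (simp add: relations_def d_def)
  have E: "E i \<in> relations scale S g" if "i \<in> S" for i
  proof -
    have "(\<Sum>q\<in>S. (\<Sum>l\<in>T. \<tau> (g i) l * \<sigma> (g' l) q) *s g q) = (\<Sum>l\<in>T. \<tau> (g i) l *s (\<Sum>q\<in>S. \<sigma> (g' l) q *s g q))"
      by (simp add: scale_sum_left scale_sum_right sum.swap[of _ S])
    also have "\<dots> = (\<Sum>q\<in>S. (if q = i then 1 else 0) *s g q)"
      by (simp add: \<sigma> \<tau> sum_scale_indicator[OF S(1) that])
    finally show ?thesis
      unfolding E_def using \<sigma>0 that by (intro diff_in_relations) auto
  qed
  have "c q = (\<Sum>i\<in>S. if q = i then c i else 0)"
    using relations_outside[OF c] S(1) by (cases "q \<in> S") auto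
  also have "\<dots> = (\<Sum>i\<in>S. E i q * c i + c i * (\<Sum>l\<in>T. \<tau> (g i) l * \<sigma> (g' l) q))"
    by (rule sum.cong) (auto simp: E_def algebra_simps)
  also have "\<dots> = (\<Sum>i\<in>S. E i q * c i) + (\<Sum>l\<in>T. d l * \<sigma> (g' l) q)"
    by (simp add: sum.distrib d_def sum_distrib_left sum_distrib_right sum.swap[of _ T] mult.assoc)
  finally have decomp: "c q = (\<Sum>i\<in>S. E i q * c i) + (\<Sum>l\<in>T. d l * \<sigma> (g' l) q)" .
  have "(\<Sum>i\<in>S. E i q * c i) \<in> K" using E c by (auto intro!: ideal_sum[OF K] rel_g)
  moreover have "(\<Sum>l\<in>T. d l * \<sigma> (g' l) q) \<in> K"
    by (intro ideal_sum[OF K] ideal_mult_right[OF K] rel_g'[OF d])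
  ultimately show ?thesis unfolding decomp by (rule ideal_add[OF K])
qed

lemma free_module_no_relations:
  assumes "finite S" "span (g ` S) = UNIV" and no_rel: "relations scale S g \<subseteq> {\<lambda>_. 0}"
  shows "free_module scale"
proof (cases "(1::'a) = 0")
  case True
  then have "x = 0" for x :: 'b by (metis scale_one scale_zero_left)
  then show ?thesis unfolding free_module_def by (auto intro!: exI[of _ "{}"] simp: independent_empty)
next
  case False
  have inj: "inj_on g S"
  proof (rule inj_onI, rule ccontr)
    fix i j assume ij: "i \<in> S" "j \<in> S" "g i = g j" "i \<noteq> j"
    then have "(\<lambda>l. (if l = i then 1 else 0) - (if l = j then 1 else 0)) \<in> relations scale S g"
      by (intro diff_in_relations) (auto simp: sum_scale_indicator assms(1))
    then have "(\<lambda>l. (if l = i then 1 else 0) - (if l = j then 1 else (0::'a))) = (\<lambda>_. 0)"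
      using no_rel by blast
    from fun_cong[OF this, of i] ij(4) False show False by simp
  qed
  have "u v = 0" if sum: "(\<Sum>v\<in>g ` S. u v *s v) = 0" and v: "v \<in> g ` S" for u v
  proof -
    have "(\<Sum>i\<in>S. u (g i) *s g i) = (\<Sum>v\<in>g ` S. u v *s v)" by (simp add: sum.reindex[OF inj])
    then have "(\<Sum>i\<in>S. u (g i) *s g i) = 0" using sum by simp
    then have "(\<lambda>i. if i \<in> S then u (g i) else 0) \<in> relations scale S g"
      unfolding relations_def by (simp cong: sum.cong)
    then have zero: "(\<lambda>i. if i \<in> S then u (g i) else 0) = (\<lambda>_. 0)" using no_rel by blast
    from v obtain i where "i \<in> S" "v = g i" by blast
    with fun_cong[OF zero, of i] show ?thesis by simp
  qed
  then have "independent (g ` S)" using dependent_finite[of "g ` S"] assms(1) by auto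
  with assms(2) show ?thesis unfolding free_module_def by blast
qed

lemma free_module_if_relation_entries_in_lincombs:
  assumes P: "presentation scale S g L \<kappa>"
    and J: "is_ideal J" "\<And>b. b \<in> J \<Longrightarrow> (1 - b) dvd 1"
    and entries: "\<And>c i. c \<in> relations scale S g \<Longrightarrow> c i \<in> lincombs J (presentation_entries S L \<kappa>)"
  shows "free_module scale"
proof -
  let ?X = "presentation_entries S L \<kappa>"
  have "finite ?X" using P unfolding presentation_def presentation_entries_def by simp
  moreover have "?X \<subseteq> lincombs J ?X"
    using P entries unfolding presentation_def presentation_entries_def by auto
  ultimately have X0: "?X \<subseteq> {0}" using nakayama[OF J(1)] J(2) by blast
  have "c = (\<lambda>_. 0)" if c: "c \<in> relations scale S g" for c
  proof
    fix i
    obtain a where a: "c = (\<lambda>i. \<Sum>l\<in>L. a l * \<kappa> l i)" using P c unfolding presentation_def by blast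
    show "c i = 0"
    proof (cases "i \<in> S")
      case True
      then have "\<kappa> l i = 0" if "l \<in> L" for l
        using X0 that unfolding presentation_entries_def by auto
      then show ?thesis by (simp add: a)
    qed (rule relations_outside[OF c])
  qed
  then show ?thesis using free_module_no_relations P unfolding presentation_def by blast
qed

end

section \<open>Finitely supported formal sums\<close>

lemma fsupp_zero [simp]: "fsupp (\<lambda>_. 0)"
  by (simp add: fsupp_def)

lemma fsupp_delta [simp]: "fsupp (delta z)"
  unfolding fsupp_def delta_def by simp

lemma fsupp_add [simp]: "fsupp c \<Longrightarrow> fsupp d \<Longrightarrow> fsupp (\<lambda>z. c z + d z)"
  unfolding fsupp_def by (rule finite_subset[of _ "{x. c x \<noteq> 0} \<union> {x. d x \<noteq> 0}"]) auto

lemma fsupp_uminus [simp]: "fsupp (\<lambda>z. - c z) \<longleftrightarrow> fsupp c"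
  unfolding fsupp_def by simp

lemma fsupp_diff [simp]: "fsupp c \<Longrightarrow> fsupp d \<Longrightarrow> fsupp (\<lambda>z. c z - d z)"
  using fsupp_add[of c "\<lambda>z. - d z"] by simp

lemma fsupp_sum: "finite A \<Longrightarrow> (\<And>i. i \<in> A \<Longrightarrow> fsupp (f i)) \<Longrightarrow> fsupp (\<lambda>z. \<Sum>i\<in>A. f i z)"
  by (induction A rule: finite_induct) simp_all

lemma fsupp_scale_delta [simp]: "fsupp (\<lambda>w. k * delta z w)"
  unfolding fsupp_def delta_def by simp

lemma fsupp_induct [consumes 1, case_names zero add uminus delta]:
  assumes "fsupp c" and zero: "P (\<lambda>_. 0)"
    and add: "\<And>c d. fsupp c \<Longrightarrow> fsupp d \<Longrightarrow> P c \<Longrightarrow> P d \<Longrightarrow> P (\<lambda>z. c z + d z)"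
    and uminus: "\<And>c. fsupp c \<Longrightarrow> P c \<Longrightarrow> P (\<lambda>z. - c z)"
    and delta: "\<And>z. P (delta z)"
  shows "P c"
proof -
  have scale_delta: "P (\<lambda>w. k * delta z w)" for k z
  proof (induction k rule: int_induct[where k = 0])
    case base
    then show ?case using zero by simp
  next
    case (step1 k)
    from add[OF _ _ step1(2) delta] show ?case by (simp add: algebra_simps)
  next
    case (step2 k)
    from add[OF _ _ step2(2) uminus[OF _ delta]] show ?case by (simp add: algebra_simps)
  qed
  have sums: "P (\<lambda>w. \<Sum>z\<in>A. c z * delta z w)" if "finite A" for A
    using that by (induction A rule: finite_induct) (simp_all add: zero add fsupp_sum scale_delta)
  have decomp: "(\<Sum>z | c z \<noteq> 0. c z * delta z w) = c w" for w
  proof -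
    have "(\<Sum>z | c z \<noteq> 0. c z * delta z w) = (\<Sum>z | c z \<noteq> 0. if w = z then c z else 0)"
      by (rule sum.cong) (auto simp: delta_def)
    also have "\<dots> = c w" using \<open>fsupp c\<close> unfolding fsupp_def by simp
    finally show ?thesis .
  qed
  from sums[of "{z. c z \<noteq> 0}"] show ?thesis using \<open>fsupp c\<close> unfolding fsupp_def decomp by simp
qed

definition free_ext :: "('c \<Rightarrow> 'a::comm_ring_1) \<Rightarrow> ('c \<Rightarrow> int) \<Rightarrow> 'a"
  where "free_ext \<phi> c = (\<Sum>z | c z \<noteq> 0. of_int (c z) * \<phi> z)"

lemma free_ext_zero [simp]: "free_ext \<phi> (\<lambda>_. 0) = 0"
  by (simp add: free_ext_def)

lemma free_ext_eq:
  assumes "finite F" "{z. c z \<noteq> 0} \<subseteq> F"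
  shows "free_ext \<phi> c = (\<Sum>z\<in>F. of_int (c z) * \<phi> z)"
  unfolding free_ext_def by (rule sum.mono_neutral_left) (use assms in auto)

lemma free_ext_add:
  assumes "fsupp c" "fsupp d"
  shows "free_ext \<phi> (\<lambda>z. c z + d z) = free_ext \<phi> c + free_ext \<phi> d"
proof -
  let ?F = "{z. c z \<noteq> 0} \<union> {z. d z \<noteq> 0}"
  have "finite ?F" using assms unfolding fsupp_def by simp
  then show ?thesis
    by (subst (1 2 3) free_ext_eq[of ?F]) (auto simp: distrib_right sum.distrib)
qed

lemma free_ext_uminus: "free_ext \<phi> (\<lambda>z. - c z) = - free_ext \<phi> c"
  unfolding free_ext_def by (simp add: sum_negf)

lemma free_ext_diff:
  "fsupp c \<Longrightarrow> fsupp d \<Longrightarrow> free_ext \<phi> (\<lambda>z. c z - d z) = free_ext \<phi> c - free_ext \<phi> d"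
  using free_ext_add[of c "\<lambda>z. - d z" \<phi>] by (simp add: free_ext_uminus)

lemma free_ext_delta: "free_ext \<phi> (delta z) = \<phi> z"
proof -
  have "{y. delta z y \<noteq> 0} = {z}" by (auto simp: delta_def)
  then show ?thesis unfolding free_ext_def by (simp add: delta_def)
qed

lemma free_ext_sum:
  "finite A \<Longrightarrow> (\<And>i. i \<in> A \<Longrightarrow> fsupp (f i)) \<Longrightarrow>
    free_ext \<phi> (\<lambda>z. \<Sum>i\<in>A. f i z) = (\<Sum>i\<in>A. free_ext \<phi> (f i))"
  by (induction A rule: finite_induct) (simp_all add: free_ext_add fsupp_sum)

section \<open>The relations of the Frobenius pullback\<close>

lemma frob_rel_fsupp: "c \<in> frob_rel scale p \<Longrightarrow> fsupp c"
  by (induction rule: frob_rel.induct) (simp_all add: fsupp_delta)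

lemma frob_rel_diff: "c \<in> frob_rel scale p \<Longrightarrow> d \<in> frob_rel scale p \<Longrightarrow> (\<lambda>x. c x - d x) \<in> frob_rel scale p"
  using frob_rel.plus[OF _ frob_rel.uminus, of c scale p d] by simp

lemma frob_cls_eq_iff:
  "frob_cls scale p c = frob_cls scale p d \<longleftrightarrow> (\<lambda>z. c z - d z) \<in> frob_rel scale p"
proof
  assume "frob_cls scale p c = frob_cls scale p d"
  moreover have "d \<in> frob_cls scale p d" unfolding frob_cls_def using frob_rel.zero by simp
  ultimately have "d \<in> frob_cls scale p c" by simp
  then show "(\<lambda>z. c z - d z) \<in> frob_rel scale p" unfolding frob_cls_def by simp
next
  assume cd: "(\<lambda>z. c z - d z) \<in> frob_rel scale p"
  have "(\<lambda>z. d z - e z) \<in> frob_rel scale p" if "(\<lambda>z. c z - e z) \<in> frob_rel scale p" for e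
    using frob_rel_diff[OF that cd] by (simp add: algebra_simps)
  moreover have "(\<lambda>z. c z - e z) \<in> frob_rel scale p" if "(\<lambda>z. d z - e z) \<in> frob_rel scale p" for e
    using frob_rel.plus[OF that cd] by (simp add: algebra_simps)
  ultimately show "frob_cls scale p c = frob_cls scale p d" unfolding frob_cls_def by blast
qed

lemma frob_act_delta: "frob_act s (delta (1, m)) = delta (s, m)"
proof (intro ext, clarify)
  fix t m'
  have "{s'. s * s' = t \<and> delta (1, m) (s', m') \<noteq> 0} = (if t = s \<and> m' = m then {1} else {})"
    by (auto simp: delta_def)
  then show "frob_act s (delta (1, m)) (t, m') = delta (s, m) (t, m')"
    unfolding frob_act_def by (simp add: delta_def)
qed

lemma free_ext_frob_rel:
  assumes K: "is_ideal K"
    and "\<And>s s' m. \<phi> (s + s', m) - \<phi> (s, m) - \<phi> (s', m) \<in> K"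
    and "\<And>s m m'. \<phi> (s, m + m') - \<phi> (s, m) - \<phi> (s, m') \<in> K"
    and "\<And>s a m. \<phi> (s * a ^ p, m) - \<phi> (s, scale a m) \<in> K"
    and c: "c \<in> frob_rel scale p"
  shows "free_ext \<phi> c \<in> K"
  using c
proof (induction rule: frob_rel.induct)
  case zero
  show ?case by (simp add: ideal_zero[OF K])
next
  case (add_left s s' m)
  then show ?case using assms(2) by (simp add: free_ext_diff fsupp_add free_ext_delta)
next
  case (add_right s m m')
  then show ?case using assms(3) by (simp add: free_ext_diff free_ext_delta)
next
  case (frob s a m)
  then show ?case using assms(4) by (simp add: free_ext_diff free_ext_delta)
next
  case (plus c d)
  then show ?case by (simp add: free_ext_add frob_rel_fsupp ideal_add[OF K])
next
  case (uminus c)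
  then show ?case by (simp add: free_ext_uminus ideal_neg[OF K])
qed

context module
begin

text \<open>The defect of the coordinates \<open>\<sigma>\<close> from being additive or linear is a relation, and the
  Frobenius is additive; so modulo \<open>K\<close> the map \<open>s \<otimes> y \<mapsto> s \<sigma>\<^sub>j(y)\<^sup>p\<close> respects the defining
  relations of \<open>F\<^sup>*M\<close>.\<close>

lemma free_ext_coordinate_power_frob_rel:
  assumes p: "prime p" "CHAR('a) = p"
    and \<sigma>0: "\<And>y i. i \<notin> S \<Longrightarrow> \<sigma> y i = 0" and \<sigma>: "\<And>y. (\<Sum>i\<in>S. \<sigma> y i *s g i) = y"
    and K: "is_ideal K" and pow: "\<And>k. k \<in> relations scale S g \<Longrightarrow> k j ^ p \<in> K"
    and d: "d \<in> frob_rel scale p"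
  shows "free_ext (\<lambda>(s, y). s * \<sigma> y j ^ p) d \<in> K"
proof (rule free_ext_frob_rel[OF K _ _ _ d]; clarsimp)
  have dream: "(x + y) ^ p = x ^ p + y ^ p" for x y :: 'a
    by (rule freshmans_dream) (simp_all add: p)
  have defect: "\<sigma> y j ^ p = b j ^ p + (\<sigma> y j - b j) ^ p \<and> (\<lambda>i. \<sigma> y i - b i) \<in> relations scale S g"
    if "\<And>i. i \<notin> S \<Longrightarrow> b i = 0" "(\<Sum>i\<in>S. b i *s g i) = y" for y b
    using dream[of "b j" "\<sigma> y j - b j"] that \<sigma>0 \<sigma> by (auto intro: diff_in_relations)
  fix s s' a :: 'a and m m' :: 'b
  show "(s + s') * \<sigma> m j ^ p - s * \<sigma> m j ^ p - s' * \<sigma> m j ^ p \<in> K"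
    by (simp add: algebra_simps ideal_zero[OF K])
  have "\<sigma> (m + m') j ^ p = (\<sigma> m j + \<sigma> m' j) ^ p + (\<sigma> (m + m') j - (\<sigma> m j + \<sigma> m' j)) ^ p"
    and "(\<lambda>i. \<sigma> (m + m') i - (\<sigma> m i + \<sigma> m' i)) \<in> relations scale S g"
    using defect[of "\<lambda>i. \<sigma> m i + \<sigma> m' i" "m + m'"] \<sigma>0 \<sigma> by (simp_all add: scale_left_distrib sum.distrib)
  with pow show "s * \<sigma> (m + m') j ^ p - s * \<sigma> m j ^ p - s * \<sigma> m' j ^ p \<in> K"
    using ideal_mult_left[OF K] by (fastforce simp: dream algebra_simps)
  have "(\<Sum>i\<in>S. (a * \<sigma> m i) *s g i) = a *s (\<Sum>i\<in>S. \<sigma> m i *s g i)"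
    by (simp add: scale_sum_right)
  then have "(\<Sum>i\<in>S. (a * \<sigma> m i) *s g i) = a *s m" by (simp add: \<sigma>)
  then have "\<sigma> (a *s m) j ^ p = (a * \<sigma> m j) ^ p + (\<sigma> (a *s m) j - a * \<sigma> m j) ^ p"
    and "(\<lambda>i. \<sigma> (a *s m) i - a * \<sigma> m i) \<in> relations scale S g"
    using defect[of "\<lambda>i. a * \<sigma> m i" "a *s m"] \<sigma>0 by simp_all
  with pow show "s * a ^ p * \<sigma> m j ^ p - s * \<sigma> (a *s m) j ^ p \<in> K"
    using ideal_mult_left[OF K] ideal_neg[OF K] by (fastforce simp: power_mult_distrib algebra_simps)
qed

end

locale frob_pullback_module = module scale
  for scale :: "'a::comm_ring_1 \<Rightarrow> 'b::ab_group_add \<Rightarrow> 'b" (infixr \<open>*s\<close> 75) +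
  fixes p :: nat and h :: "'b \<Rightarrow> ('a \<times> 'b \<Rightarrow> int) set"
  assumes iso: "frob_pullback_iso scale p h"
begin

text \<open>\<open>pullback_elem c\<close> is the element of \<open>M\<close> that \<open>h\<close> sends to the class of the formal sum \<open>c\<close>;
  \<open>one_tensor m\<close> corresponds to \<open>1 \<otimes> m\<close>.\<close>

definition pullback_elem :: "('a \<times> 'b \<Rightarrow> int) \<Rightarrow> 'b"
  where "pullback_elem c = inv h (frob_cls scale p c)"

definition one_tensor :: "'b \<Rightarrow> 'b"
  where "one_tensor m = pullback_elem (delta (1, m))"

lemma h_pullback_elem: "fsupp c \<Longrightarrow> h (pullback_elem c) = frob_cls scale p c"
  unfolding pullback_elem_def
  by (rule f_inv_into_f) (use iso in \<open>auto simp: frob_pullback_iso_def bij_betw_def frob_pullback_def\<close>)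

lemma pullback_elem_eqI: "h x = frob_cls scale p c \<Longrightarrow> pullback_elem c = x"
  using iso unfolding frob_pullback_iso_def bij_betw_def pullback_elem_def by (metis inv_f_f)

lemma pullback_elem_surj: obtains c where "fsupp c" "x = pullback_elem c"
proof -
  have "h x \<in> frob_pullback scale p" using iso unfolding frob_pullback_iso_def bij_betw_def by auto
  then obtain c where "fsupp c" "h x = frob_cls scale p c" unfolding frob_pullback_def by auto
  with that pullback_elem_eqI show ?thesis by metis
qed

lemma pullback_elem_add:
  "fsupp c \<Longrightarrow> fsupp d \<Longrightarrow> pullback_elem (\<lambda>z. c z + d z) = pullback_elem c + pullback_elem d"
  using iso h_pullback_elem unfolding frob_pullback_iso_def by (intro pullback_elem_eqI) blast

lemma pullback_elem_act: "fsupp c \<Longrightarrow> pullback_elem (frob_act r c) = r *s pullback_elem c"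
  using iso h_pullback_elem unfolding frob_pullback_iso_def by (intro pullback_elem_eqI) blast

lemma pullback_elem_eq_iff:
  "fsupp c \<Longrightarrow> fsupp d \<Longrightarrow> pullback_elem c = pullback_elem d \<longleftrightarrow> (\<lambda>z. c z - d z) \<in> frob_rel scale p"
  by (metis frob_cls_eq_iff h_pullback_elem pullback_elem_def)

lemma pullback_elem_zero: "pullback_elem (\<lambda>_. 0) = 0"
  using pullback_elem_add[of "\<lambda>_. 0" "\<lambda>_. 0"] by simp

lemma pullback_elem_uminus:
  assumes "fsupp c"
  shows "pullback_elem (\<lambda>z. - c z) = - pullback_elem c"
proof -
  have "pullback_elem c + pullback_elem (\<lambda>z. - c z) = 0"
    using pullback_elem_add[of c "\<lambda>z. - c z"] assms by (simp add: pullback_elem_zero)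
  then show ?thesis by (metis add.inverse_unique)
qed

lemma pullback_elem_sum:
  "finite A \<Longrightarrow> (\<And>i. i \<in> A \<Longrightarrow> fsupp (f i)) \<Longrightarrow>
    pullback_elem (\<lambda>z. \<Sum>i\<in>A. f i z) = (\<Sum>i\<in>A. pullback_elem (f i))"
  by (induction A rule: finite_induct) (simp_all add: pullback_elem_zero pullback_elem_add fsupp_sum)

lemma pullback_elem_delta: "pullback_elem (delta (s, m)) = s *s one_tensor m"
  using pullback_elem_act[of "delta (1, m)" s] by (simp add: frob_act_delta one_tensor_def)

lemma one_tensor_add: "one_tensor (m + m') = one_tensor m + one_tensor m'"
proof -
  have "pullback_elem (delta (1, m + m')) = pullback_elem (\<lambda>z. delta (1, m) z + delta (1, m') z)"
    using frob_rel.add_right[of 1 m m' scale p] by (simp add: pullback_elem_eq_iff diff_diff_eq)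
  then show ?thesis by (simp add: one_tensor_def pullback_elem_add)
qed

lemma one_tensor_scale: "one_tensor (a *s m) = a ^ p *s one_tensor m"
proof -
  have "pullback_elem (delta (1 * a ^ p, m)) = pullback_elem (delta (1, a *s m))"
    using frob_rel.frob[of 1 a p m scale] by (simp add: pullback_elem_eq_iff)
  then show ?thesis using pullback_elem_delta[of "a ^ p" m] by (simp add: one_tensor_def)
qed

lemma one_tensor_zero: "one_tensor 0 = 0"
  using one_tensor_add[of 0 0] by simp

lemma one_tensor_sum: "one_tensor (\<Sum>i\<in>A. a i *s g i) = (\<Sum>i\<in>A. a i ^ p *s one_tensor (g i))"
  by (induction A rule: infinite_finite_induct) (simp_all add: one_tensor_add one_tensor_scale one_tensor_zero)

lemma span_one_tensor:
  fixes g :: "nat \<Rightarrow> 'b"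
  assumes S: "finite S" "span (g ` S) = UNIV"
  shows "span ((\<lambda>i. one_tensor (g i)) ` S) = UNIV"
proof -
  let ?V = "span ((\<lambda>i. one_tensor (g i)) ` S)"
  obtain \<sigma> :: "'b \<Rightarrow> nat \<Rightarrow> 'a" where \<sigma>: "\<And>y. (\<Sum>i\<in>S. \<sigma> y i *s g i) = y"
    using span_image_coordinates[OF S] by metis
  have one_tensor: "one_tensor m \<in> ?V" for m
    using one_tensor_sum[of "\<sigma> m" g S] by (simp add: \<sigma> span_sum span_scale span_base)
  have "pullback_elem c \<in> ?V" if "fsupp c" for c
    using that
  proof (induction rule: fsupp_induct)
    case zero
    then show ?case by (simp add: pullback_elem_zero span_zero)
  next
    case (add c d)
    then show ?case by (simp add: pullback_elem_add span_add)
  next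
    case (uminus c)
    then show ?case by (simp add: pullback_elem_uminus span_neg)
  next
    case (delta z)
    then show ?case by (cases z) (simp add: pullback_elem_delta span_scale one_tensor)
  qed
  then show ?thesis by (metis UNIV_eq_I pullback_elem_surj)
qed

text \<open>Applied to a relation \<open>\<Sum> c\<^sub>i (1 \<otimes> g\<^sub>i) = 0\<close>, that map gives
  \<open>\<Sum> c\<^sub>i \<sigma>\<^sub>j(g\<^sub>i)\<^sup>p \<equiv> c\<^sub>j\<close> modulo \<open>K\<close>.\<close>

lemma one_tensor_relation_entries:
  assumes p: "prime p" "CHAR('a) = p" and S: "finite S" "span (g ` S) = UNIV" and K: "is_ideal K"
    and pow: "\<And>k j. k \<in> relations scale S g \<Longrightarrow> k j ^ p \<in> K"
    and c: "c \<in> relations scale S (\<lambda>i. one_tensor (g i))"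
  shows "c j \<in> K"
proof -
  obtain \<sigma> :: "'b \<Rightarrow> nat \<Rightarrow> 'a" where \<sigma>0: "\<And>y i. i \<notin> S \<Longrightarrow> \<sigma> y i = 0" and \<sigma>: "\<And>y. (\<Sum>i\<in>S. \<sigma> y i *s g i) = y"
    using span_image_coordinates[OF S] by blast
  define e where "e i = (\<lambda>q. if q = i then 1 else (0::'a))" for i :: nat
  define D where "D = (\<lambda>z. \<Sum>i\<in>S. delta (c i, g i) z)"
  have "pullback_elem D = (\<Sum>i\<in>S. c i *s one_tensor (g i))"
    unfolding D_def by (simp add: pullback_elem_sum[OF S(1)] pullback_elem_delta)
  also have "\<dots> = pullback_elem (\<lambda>_. 0)" using c by (simp add: relations_def pullback_elem_zero)
  finally have "D \<in> frob_rel scale p"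
    using pullback_elem_eq_iff[of D "\<lambda>_. 0"] by (simp add: D_def fsupp_sum S(1))
  then have D: "free_ext (\<lambda>(s, y). s * \<sigma> y j ^ p) D \<in> K"
    using free_ext_coordinate_power_frob_rel[OF p, of S \<sigma> g K j D] \<sigma>0 \<sigma> K pow by blast
  have rel: "(\<lambda>q. \<sigma> (g i) q - e i q) \<in> relations scale S g" if "i \<in> S" for i
    using that \<sigma>0 by (intro diff_in_relations) (auto simp: e_def \<sigma> sum_scale_indicator S(1))
  have "\<sigma> (g i) j ^ p = e i j + (\<sigma> (g i) j - e i j) ^ p" for i
  proof -
    have "(e i j + (\<sigma> (g i) j - e i j)) ^ p = e i j ^ p + (\<sigma> (g i) j - e i j) ^ p"
      by (rule freshmans_dream) (simp_all add: p)
    moreover have "e i j ^ p = e i j" using prime_gt_0_nat[OF p(1)] by (simp add: e_def zero_power)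
    ultimately show ?thesis by simp
  qed
  moreover have "(\<Sum>i\<in>S. c i * e i j) = c j"
  proof -
    have "(\<Sum>i\<in>S. c i * e i j) = (\<Sum>i\<in>S. if j = i then c i else 0)" by (rule sum.cong) (simp_all add: e_def)
    then show ?thesis using relations_outside[OF c, of j] S(1) by auto
  qed
  ultimately have "free_ext (\<lambda>(s, y). s * \<sigma> y j ^ p) D = c j + (\<Sum>i\<in>S. c i * (\<sigma> (g i) j - e i j) ^ p)"
    by (simp add: D_def S(1) free_ext_sum free_ext_delta distrib_left sum.distrib)
  then have "c j = free_ext (\<lambda>(s, y). s * \<sigma> y j ^ p) D - (\<Sum>i\<in>S. c i * (\<sigma> (g i) j - e i j) ^ p)"
    by simp
  also have "\<dots> \<in> K"
    using D rel pow by (intro ideal_diff[OF K] ideal_sum[OF K] ideal_mult_left[OF K]) auto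
  finally show ?thesis .
qed

text \<open>This is where \<open>M \<cong> F\<^sup>*M\<close> enters: the elements \<open>1 \<otimes> g\<^sub>i\<close> form a second generating family
  of \<open>M\<close>, indexed by the same set.\<close>

lemma relation_entries_in_ideal:
  assumes p: "prime p" "CHAR('a) = p" and S: "finite S" "span (g ` S) = UNIV" and K: "is_ideal K"
    and powers: "\<And>k j. k \<in> relations scale S g \<Longrightarrow> k j ^ p \<in> K"
    and products: "\<And>c e i q. c \<in> relations scale S g \<Longrightarrow> e \<in> relations scale S g \<Longrightarrow> e q * c i \<in> K"
    and c: "c \<in> relations scale S g"
  shows "c i \<in> K"
proof (rule relation_entries_transfer[where g' = "\<lambda>i. one_tensor (g i)", OF S S(1) span_one_tensor[OF S] K])
  show "d l \<in> K" if "d \<in> relations scale S (\<lambda>i. one_tensor (g i))" for d l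
    using one_tensor_relation_entries[OF p S K _ that] powers by blast
qed (use products c in auto)

end

theorem lemma2p8:
  fixes scale :: "'a::comm_ring_1 \<Rightarrow> 'b::ab_group_add \<Rightarrow> 'b"
    and p :: nat
  assumes "prime p"
    and "CHAR('a) = p"
    and "local_ring TYPE('a)"
    and "module scale"
    and "fin_presented scale"
    and "\<exists>h. frob_pullback_iso scale p h"
  shows "free_module scale"
proof -
  interpret module scale by fact
  obtain h where "frob_pullback_iso scale p h" using assms(6) by blast
  then interpret frob_pullback_module scale p h
    by (intro frob_pullback_module.intro frob_pullback_module_axioms.intro assms(4))
  define J where "J = {x::'a. \<not> x dvd 1}"
  have J: "is_ideal J" unfolding J_def using assms(3) by (rule local_ring_nonunits_ideal)
  have J_units: "(1 - b) dvd 1" if "b \<in> J" for b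
    using ideal_add[OF J _ that, of "1 - b"] by (auto simp: J_def)
  obtain S g and L :: "(nat \<Rightarrow> 'a) set" and \<kappa> where P: "presentation scale S g L \<kappa>"
    and nonunit: "\<And>c i. c \<in> relations scale S g \<Longrightarrow> i \<in> S \<Longrightarrow> \<not> c i dvd 1"
    using exists_minimal_presentation[OF assms(5)] by blast
  have S: "finite S" "span (g ` S) = UNIV" using P by (simp_all add: presentation_def)
  define K where "K = lincombs J (presentation_entries S L \<kappa>)"
  have K: "is_ideal K" unfolding K_def by (rule is_ideal_lincombs[OF J])
  have in_J: "c i \<in> J" if "c \<in> relations scale S g" for c i
    using nonunit[OF that] relations_outside[OF that] ideal_zero[OF J] by (cases "i \<in> S") (auto simp: J_def)
  have products: "e q * c i \<in> K" if "c \<in> relations scale S g" "e \<in> relations scale S g" for c e i q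
    unfolding K_def by (rule mult_mem_lincombs[OF J in_J[OF that(2)] presentation_relation_entries[OF P that(1)]])
  have powers: "k j ^ p \<in> K" if "k \<in> relations scale S g" for k j
    unfolding K_def using power_mem_lincombs[OF J in_J[OF that] presentation_relation_entries[OF P that]]
      prime_gt_1_nat[OF assms(1)] .
  have "c i \<in> K" if "c \<in> relations scale S g" for c i
    by (rule relation_entries_in_ideal[OF assms(1,2) S K]) (auto intro: powers products that)
  then show ?thesis
    using free_module_if_relation_entries_in_lincombs[OF P J J_units] unfolding K_def by blast
qed

end
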